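(* Let $\Sigma$ be an alphabet and $\mathcal{A}$ a reversible weighted automaton over $\mathbb{F}_2$ and $\Sigma$ with precisely one initial state. Then $\|\mathcal{A}\|=\underline{L}$ (characteristic series over $\mathbb{F}_2$) for some $L\in\mathrm{RevL}_1(\mathbb{B},\Sigma)$. As a consequence, $\mathrm{RevL}_1(\mathbb{F}_2,\Sigma)=\mathrm{RevL}_1(\mathbb{B},\Sigma)$.
   Context: $\mathbb{F}_2$ is the two-element field and $\mathbb{B}=(\{0,1\},\lor,\land,0,1)$ the Boolean semiring. For a semiring $S$ and finite nonempty alphabet $\Sigma$, a series is a map $r\colon\Sigma^*\to S$ with value $(r,w)$, support $\mathrm{supp}(r)=\{w\mid(r,w)\neq0\}$; the characteristic series $\underline{L}$ of $L\subseteq\Sigma^*$ has coefficient $1$ on $L$ and $0$ elsewhere. A weighted automaton over $S$ and $\Sigma$ is $\mathcal{A}=(Q,\sigma,\iota,\tau)$ with $Q$ finite, $\sigma\colon Q\times\Sigma\times Q\to S$, $\iota,\tau\colon Q\to S$; a run on $w=a_1\cdots a_t$ is $q_0a_1q_1\cdots a_tq_t$ with all $\sigma(q_{k-1},a_k,q_k)\neq0$, of weight $\iota(q_0)\sigma(q_0,a_1,q_1)\cdots\sigma(q_{t-1},a_t,q_t)\tau(q_t)$, and $(\|\mathcal{A}\|,w)$ is the sum of weights of all runs on $w$. An initial state is a state $q$ with $\iota(q)\neq0$. $\mathcal{A}$ is reversible if for all $p,p',q,q'\in Q$, $a\in\Sigma$: $\sigma(p,a,q)\neq0\neq\sigma(p,a,q')$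 implies $q=q'$, and $\sigma(p,a,q)\neq0\neq\sigma(p',a,q)$ implies $p=p'$. $\mathrm{RevL}_1(S,\Sigma)$ is the set of supports of series realised by reversible weighted automata over $S$ and $\Sigma$ with precisely one initial state. *)

theory Defs
  imports Main "HOL-Library.Z2"
begin

text \<open>The two-element field F_2 is the library type bit (HOL-Library.Z2).
  The Boolean semiring B = ({0,1}, or, and, 0, 1) is introduced as a new type.\<close>

typedef boolsr = "UNIV :: bool set" ..

setup_lifting type_definition_boolsr

instantiation boolsr :: comm_semiring_1
begin
lift_definition zero_boolsr :: boolsr is False .
lift_definition one_boolsr :: boolsr is True .
lift_definition plus_boolsr :: "boolsr \<Rightarrow> boolsr \<Rightarrow> boolsr" is "(\<or>)" .
lift_definition times_boolsr :: "boolsr \<Rightarrow> boolsr \<Rightarrow> boolsr" is "(\<and>)" .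
instance by standard (transfer; auto)+
end

text \<open>The functions are given on the whole state type; the
  well-formedness predicate says Q is finite and all nonzero weights live on Q.\<close>

definition weighted_automaton ::
  "'q set \<Rightarrow> ('q \<Rightarrow> 'a \<Rightarrow> 'q \<Rightarrow> 'k::zero) \<Rightarrow> ('q \<Rightarrow> 'k) \<Rightarrow> ('q \<Rightarrow> 'k) \<Rightarrow> bool" where
  "weighted_automaton Q \<sigma> \<iota> \<tau> \<longleftrightarrow> finite Q \<and>
     (\<forall>p a q. \<sigma> p a q \<noteq> 0 \<longrightarrow> p \<in> Q \<and> q \<in> Q) \<and>
     (\<forall>q. \<iota> q \<noteq> 0 \<longrightarrow> q \<in> Q) \<and> (\<forall>q. \<tau> q \<noteq> 0 \<longrightarrow> q \<in> Q)"

definition runs :: "'q set \<Rightarrow> ('q \<Rightarrow> 'a \<Rightarrow> 'q \<Rightarrow> 'k::zero) \<Rightarrow> 'a list \<Rightarrow> 'q list set" where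
  "runs Q \<sigma> w = {qs. length qs = Suc (length w) \<and> set qs \<subseteq> Q \<and>
     (\<forall>k < length w. \<sigma> (qs ! k) (w ! k) (qs ! Suc k) \<noteq> 0)}"

definition run_weight ::
  "('q \<Rightarrow> 'a \<Rightarrow> 'q \<Rightarrow> 'k::comm_semiring_1) \<Rightarrow> ('q \<Rightarrow> 'k) \<Rightarrow> ('q \<Rightarrow> 'k) \<Rightarrow> 'a list \<Rightarrow> 'q list \<Rightarrow> 'k" where
  "run_weight \<sigma> \<iota> \<tau> w qs =
     \<iota> (qs ! 0) * (\<Prod>k < length w. \<sigma> (qs ! k) (w ! k) (qs ! Suc k)) * \<tau> (qs ! length w)"

definition behaviour ::
  "'q set \<Rightarrow> ('q \<Rightarrow> 'a \<Rightarrow> 'q \<Rightarrow> 'k::comm_semiring_1) \<Rightarrow> ('q \<Rightarrow> 'k) \<Rightarrow> ('q \<Rightarrow> 'k) \<Rightarrow> 'a list \<Rightarrow> 'k" where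
  "behaviour Q \<sigma> \<iota> \<tau> w = (\<Sum>qs \<in> runs Q \<sigma> w. run_weight \<sigma> \<iota> \<tau> w qs)"

definition supp :: "('a list \<Rightarrow> 'k::zero) \<Rightarrow> 'a list set" where
  "supp r = {w. r w \<noteq> 0}"

definition char_series :: "'a list set \<Rightarrow> 'a list \<Rightarrow> 'k::zero_neq_one" where
  "char_series L w = (if w \<in> L then 1 else 0)"

definition reversible :: "('q \<Rightarrow> 'a \<Rightarrow> 'q \<Rightarrow> 'k::zero) \<Rightarrow> bool" where
  "reversible \<sigma> \<longleftrightarrow>
     (\<forall>p q q' a. \<sigma> p a q \<noteq> 0 \<and> \<sigma> p a q' \<noteq> 0 \<longrightarrow> q = q') \<and>
     (\<forall>p p' q a. \<sigma> p a q \<noteq> 0 \<and> \<sigma> p' a q \<noteq> 0 \<longrightarrow> p = p')"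

definition one_initial :: "('q \<Rightarrow> 'k::zero) \<Rightarrow> bool" where
  "one_initial \<iota> \<longleftrightarrow> (\<exists>!q. \<iota> q \<noteq> 0)"

text \<open>Any finite state set can be renamed into nat, so
  state sets are taken to be finite subsets of nat.\<close>

definition RevL1 :: "'k::comm_semiring_1 itself \<Rightarrow> 'a list set set" where
  "RevL1 _ = {supp (behaviour Q \<sigma> \<iota> \<tau>) | (Q :: nat set) (\<sigma> :: nat \<Rightarrow> 'a \<Rightarrow> nat \<Rightarrow> 'k) \<iota> \<tau>.
      weighted_automaton Q \<sigma> \<iota> \<tau> \<and> reversible \<sigma> \<and> one_initial \<iota>}"

end

theory Submission
  imports Defs
begin

text \<open>In a semiring whose only nonzero element is 1, such as F_2 or B, all nonzero run
  weights equal 1. A reversible automaton is in particular forward deterministic, so with a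
  single initial state each word has at most one run of nonzero weight; hence no cancellation
  1 + 1 = 0 can occur in F_2, and the behaviour is the characteristic series of the accepted
  language. That language only depends on which weights are nonzero, so replacing every
  nonzero weight by the 1 of the other semiring preserves it, together with reversibility and
  the single initial state; renaming the states into nat preserves the behaviour itself.\<close>

definition accepted_language ::
  "'q set \<Rightarrow> ('q \<Rightarrow> 'a \<Rightarrow> 'q \<Rightarrow> 'k::zero) \<Rightarrow> ('q \<Rightarrow> 'k) \<Rightarrow> ('q \<Rightarrow> 'k) \<Rightarrow> 'a list set" where
  "accepted_language Q \<sigma> \<iota> \<tau> = {w. \<exists>qs \<in> runs Q \<sigma> w. \<iota> (qs ! 0) \<noteq> 0 \<and> \<tau> (qs ! length w) \<noteq> 0}"

lemma runs_finite: "finite Q \<Longrightarrow> finite (runs Q \<sigma> w)"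
  by (rule finite_subset[of _ "{qs. set qs \<subseteq> Q \<and> length qs = Suc (length w)}"])
    (auto simp: runs_def finite_lists_length_eq)

lemma runs_subset_lists: "runs Q \<sigma> w \<subseteq> lists Q"
  by (auto simp: runs_def)

lemma run_state_mem:
  assumes "qs \<in> runs Q \<sigma> w" and "k \<le> length w"
  shows "qs ! k \<in> Q"
  using assms by (auto simp: runs_def)

definition rename_weights :: "('q \<Rightarrow> 'r) \<Rightarrow> 'q set \<Rightarrow> ('q \<Rightarrow> 'k::zero) \<Rightarrow> 'r \<Rightarrow> 'k" where
  "rename_weights f Q \<iota> p = (if p \<in> f ` Q then \<iota> (inv_into Q f p) else 0)"

definition rename_transitions ::
  "('q \<Rightarrow> 'r) \<Rightarrow> 'q set \<Rightarrow> ('q \<Rightarrow> 'a \<Rightarrow> 'q \<Rightarrow> 'k::zero) \<Rightarrow> 'r \<Rightarrow> 'a \<Rightarrow> 'r \<Rightarrow> 'k" where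
  "rename_transitions f Q \<sigma> p a q =
     (if p \<in> f ` Q \<and> q \<in> f ` Q then \<sigma> (inv_into Q f p) a (inv_into Q f q) else 0)"

lemma rename_weights_image [simp]:
  "inj_on f Q \<Longrightarrow> q \<in> Q \<Longrightarrow> rename_weights f Q \<iota> (f q) = \<iota> q"
  by (simp add: rename_weights_def)

lemma rename_transitions_image [simp]:
  "inj_on f Q \<Longrightarrow> p \<in> Q \<Longrightarrow> q \<in> Q \<Longrightarrow> rename_transitions f Q \<sigma> (f p) a (f q) = \<sigma> p a q"
  by (simp add: rename_transitions_def)

lemma rename_weights_nonzeroE:
  assumes "rename_weights f Q \<iota> p \<noteq> 0"
  obtains q where "q \<in> Q" "p = f q" "\<iota> q \<noteq> 0"
proof -
  have "p \<in> f ` Q"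
    using assms by (auto simp: rename_weights_def split: if_splits)
  then show thesis
    using that[of "inv_into Q f p"] assms by (simp add: rename_weights_def f_inv_into_f inv_into_into)
qed

lemma rename_transitions_nonzeroE:
  assumes "rename_transitions f Q \<sigma> p a q \<noteq> 0"
  obtains p' q' where "p' \<in> Q" "q' \<in> Q" "p = f p'" "q = f q'" "\<sigma> p' a q' \<noteq> 0"
proof -
  have "p \<in> f ` Q" "q \<in> f ` Q"
    using assms by (auto simp: rename_transitions_def split: if_splits)
  then show thesis
    using that[of "inv_into Q f p" "inv_into Q f q"] assms
    by (simp add: rename_transitions_def f_inv_into_f inv_into_into)
qed

lemma runs_rename:
  assumes "inj_on f Q"
  shows "runs (f ` Q) (rename_transitions f Q \<sigma>) w = map f ` runs Q \<sigma> w"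
proof
  show "map f ` runs Q \<sigma> w \<subseteq> runs (f ` Q) (rename_transitions f Q \<sigma>) w"
  proof
    fix qs' assume "qs' \<in> map f ` runs Q \<sigma> w"
    then obtain qs where qs: "qs \<in> runs Q \<sigma> w" and "qs' = map f qs" by blast
    moreover have "qs ! k \<in> Q" if "k \<le> length w" for k
      using run_state_mem[OF qs that] .
    ultimately show "qs' \<in> runs (f ` Q) (rename_transitions f Q \<sigma>) w"
      using assms by (auto simp: runs_def)
  qed
next
  show "runs (f ` Q) (rename_transitions f Q \<sigma>) w \<subseteq> map f ` runs Q \<sigma> w"
  proof
    fix qs assume qs: "qs \<in> runs (f ` Q) (rename_transitions f Q \<sigma>) w"
    define ps where "ps = map (inv_into Q f) qs"
    have "qs ! k \<in> f ` Q" if "k \<le> length w" for k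
      using run_state_mem[OF qs that] .
    then have "ps \<in> runs Q \<sigma> w"
      using qs by (auto simp: runs_def ps_def rename_transitions_def inv_into_into)
    moreover have "qs = map f ps"
      using qs by (auto simp: runs_def ps_def f_inv_into_f intro!: map_idI[symmetric])
    ultimately show "qs \<in> map f ` runs Q \<sigma> w" by blast
  qed
qed

lemma run_weight_rename:
  assumes "inj_on f Q" and "qs \<in> runs Q \<sigma> w"
  shows "run_weight (rename_transitions f Q \<sigma>) (rename_weights f Q \<iota>) (rename_weights f Q \<tau>) w
      (map f qs) = run_weight \<sigma> \<iota> \<tau> w qs"
proof -
  have len: "length qs = Suc (length w)"
    using assms(2) by (simp add: runs_def)
  have "qs ! k \<in> Q" if "k \<le> length w" for k
    using run_state_mem[OF assms(2) that] .
  then show ?thesis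
    using assms(1) len by (simp add: run_weight_def)
qed

lemma behaviour_rename:
  assumes "inj_on f Q"
  shows "behaviour (f ` Q) (rename_transitions f Q \<sigma>) (rename_weights f Q \<iota>) (rename_weights f Q \<tau>)
    = behaviour Q \<sigma> \<iota> \<tau>"
proof
  fix w
  have "inj_on (map f) (runs Q \<sigma> w)"
    using inj_on_map_lists[OF assms] runs_subset_lists by (rule inj_on_subset)
  then show "behaviour (f ` Q) (rename_transitions f Q \<sigma>) (rename_weights f Q \<iota>)
      (rename_weights f Q \<tau>) w = behaviour Q \<sigma> \<iota> \<tau> w"
    by (simp add: behaviour_def runs_rename[OF assms] sum.reindex run_weight_rename[OF assms])
qed

lemma weighted_automaton_rename:
  "finite Q \<Longrightarrow>
    weighted_automaton (f ` Q) (rename_transitions f Q \<sigma>) (rename_weights f Q \<iota>) (rename_weights f Q \<tau>)"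
  by (auto simp: weighted_automaton_def elim: rename_transitions_nonzeroE rename_weights_nonzeroE)

lemma reversible_rename:
  assumes "inj_on f Q" and "reversible \<sigma>"
  shows "reversible (rename_transitions f Q \<sigma>)"
  using assms unfolding reversible_def
  by (fastforce elim!: rename_transitions_nonzeroE simp: inj_on_eq_iff)

lemma one_initial_rename:
  assumes "inj_on f Q" and "\<And>q. \<iota> q \<noteq> 0 \<Longrightarrow> q \<in> Q" and "one_initial \<iota>"
  shows "one_initial (rename_weights f Q \<iota>)"
  using assms unfolding one_initial_def
  by (metis rename_weights_image rename_weights_nonzeroE)

lemma RevL1_memI:
  fixes Q :: "nat set" and \<sigma> :: "nat \<Rightarrow> 'a \<Rightarrow> nat \<Rightarrow> 'k::comm_semiring_1"
  assumes "weighted_automaton Q \<sigma> \<iota> \<tau>" and "reversible \<sigma>" and "one_initial \<iota>"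
    and "L = supp (behaviour Q \<sigma> \<iota> \<tau>)"
  shows "L \<in> RevL1 TYPE('k)"
  using assms by (auto simp: RevL1_def)

lemma supp_behaviour_in_RevL1:
  fixes \<sigma> :: "'q \<Rightarrow> 'a \<Rightarrow> 'q \<Rightarrow> 'k::comm_semiring_1"
  assumes aut: "weighted_automaton Q \<sigma> \<iota> \<tau>" and "reversible \<sigma>" and "one_initial \<iota>"
  shows "supp (behaviour Q \<sigma> \<iota> \<tau>) \<in> RevL1 TYPE('k)"
proof -
  have "finite Q" and initial_in_Q: "\<And>q. \<iota> q \<noteq> 0 \<Longrightarrow> q \<in> Q"
    using aut by (auto simp: weighted_automaton_def)
  then obtain f :: "'q \<Rightarrow> nat" where f: "inj_on f Q"
    using finite_imp_inj_to_nat_seg by blast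
  show ?thesis
  proof (rule RevL1_memI)
    show "supp (behaviour Q \<sigma> \<iota> \<tau>) = supp (behaviour (f ` Q) (rename_transitions f Q \<sigma>)
        (rename_weights f Q \<iota>) (rename_weights f Q \<tau>))"
      by (simp add: behaviour_rename[OF f])
  qed (simp_all add: weighted_automaton_rename \<open>finite Q\<close> reversible_rename[OF f \<open>reversible \<sigma>\<close>]
      one_initial_rename[OF f initial_in_Q \<open>one_initial \<iota>\<close>])
qed

lemma runs_deterministic_unique:
  assumes deterministic: "\<And>p a q q'. \<sigma> p a q \<noteq> 0 \<Longrightarrow> \<sigma> p a q' \<noteq> 0 \<Longrightarrow> q = q'"
    and qs: "qs \<in> runs Q \<sigma> w" and qs': "qs' \<in> runs Q \<sigma> w" and start: "qs ! 0 = qs' ! 0"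
  shows "qs = qs'"
proof -
  have "qs ! k = qs' ! k" if "k \<le> length w" for k
    using that
  proof (induction k)
    case 0
    show ?case using start .
  next
    case (Suc k)
    then have "k < length w" by simp
    then have "\<sigma> (qs ! k) (w ! k) (qs ! Suc k) \<noteq> 0" "\<sigma> (qs' ! k) (w ! k) (qs' ! Suc k) \<noteq> 0"
      using qs qs' by (simp_all add: runs_def)
    then show ?case
      using Suc.IH \<open>k < length w\<close> by (auto intro: deterministic)
  qed
  then show ?thesis
    using qs qs' by (auto simp: runs_def intro: nth_equalityI)
qed

lemma run_weight_two_valued:
  fixes \<sigma> :: "'q \<Rightarrow> 'a \<Rightarrow> 'q \<Rightarrow> 'k::comm_semiring_1"
  assumes two_valued: "\<And>x::'k. x \<noteq> 0 \<Longrightarrow> x = 1" and "qs \<in> runs Q \<sigma> w"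
  shows "run_weight \<sigma> \<iota> \<tau> w qs = of_bool (\<iota> (qs ! 0) \<noteq> 0 \<and> \<tau> (qs ! length w) \<noteq> 0)"
proof -
  have "(\<Prod>k < length w. \<sigma> (qs ! k) (w ! k) (qs ! Suc k)) = 1"
    using assms by (auto simp: runs_def intro!: prod.neutral)
  then show ?thesis
    using two_valued[of "\<iota> (qs ! 0)"] two_valued[of "\<tau> (qs ! length w)"]
    by (auto simp: run_weight_def)
qed

lemma behaviour_two_valued_eq_char_series:
  fixes \<sigma> :: "'q \<Rightarrow> 'a \<Rightarrow> 'q \<Rightarrow> 'k::comm_semiring_1"
  assumes two_valued: "\<And>x::'k. x \<noteq> 0 \<Longrightarrow> x = 1"
    and "finite Q" and "reversible \<sigma>" and "one_initial \<iota>"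
  shows "behaviour Q \<sigma> \<iota> \<tau> = char_series (accepted_language Q \<sigma> \<iota> \<tau>)"
proof
  fix w
  define accepting where
    "accepting = runs Q \<sigma> w \<inter> {qs. \<iota> (qs ! 0) \<noteq> 0 \<and> \<tau> (qs ! length w) \<noteq> 0}"
  have "behaviour Q \<sigma> \<iota> \<tau> w = (\<Sum>qs \<in> runs Q \<sigma> w. of_bool (\<iota> (qs ! 0) \<noteq> 0 \<and> \<tau> (qs ! length w) \<noteq> 0))"
    unfolding behaviour_def by (rule sum.cong) (simp_all add: run_weight_two_valued[OF two_valued])
  also have "\<dots> = of_nat (card accepting)"
    using runs_finite[OF \<open>finite Q\<close>, of \<sigma> w] unfolding accepting_def by simp
  finally have behaviour_card: "behaviour Q \<sigma> \<iota> \<tau> w = of_nat (card accepting)" .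
  have accepted_iff: "w \<in> accepted_language Q \<sigma> \<iota> \<tau> \<longleftrightarrow> accepting \<noteq> {}"
    by (auto simp: accepted_language_def accepting_def)
  show "behaviour Q \<sigma> \<iota> \<tau> w = char_series (accepted_language Q \<sigma> \<iota> \<tau>) w"
  proof (cases "accepting = {}")
    case True
    then show ?thesis by (simp add: behaviour_card accepted_iff char_series_def)
  next
    case False
    then obtain qs where qs: "qs \<in> accepting" by blast
    have deterministic: "\<And>p a q q'. \<sigma> p a q \<noteq> 0 \<Longrightarrow> \<sigma> p a q' \<noteq> 0 \<Longrightarrow> q = q'"
      using \<open>reversible \<sigma>\<close> unfolding reversible_def by blast
    have "qs' = qs" if "qs' \<in> accepting" for qs'
    proof (rule runs_deterministic_unique[OF deterministic])
      show "qs' \<in> runs Q \<sigma> w" "qs \<in> runs Q \<sigma> w"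
        using qs that by (simp_all add: accepting_def)
      show "qs' ! 0 = qs ! 0"
        using qs that \<open>one_initial \<iota>\<close> by (auto simp: accepting_def one_initial_def)
    qed
    with qs have "accepting = {qs}" by blast
    then show ?thesis by (simp add: behaviour_card accepted_iff char_series_def)
  qed
qed

lemma supp_char_series [simp]: "supp (char_series L :: 'a list \<Rightarrow> 'k::zero_neq_one) = L"
  by (simp add: supp_def char_series_def)

lemma of_bool_nonzero_weights:
  fixes \<sigma> :: "'q \<Rightarrow> 'a \<Rightarrow> 'q \<Rightarrow> 'k::zero" and \<iota> \<tau> :: "'q \<Rightarrow> 'k"
  defines "\<sigma>' \<equiv> \<lambda>p a q. of_bool (\<sigma> p a q \<noteq> 0) :: 'm::zero_neq_one"
    and "\<iota>' \<equiv> \<lambda>q. of_bool (\<iota> q \<noteq> 0) :: 'm"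
    and "\<tau>' \<equiv> \<lambda>q. of_bool (\<tau> q \<noteq> 0) :: 'm"
  shows "weighted_automaton Q \<sigma>' \<iota>' \<tau>' \<longleftrightarrow> weighted_automaton Q \<sigma> \<iota> \<tau>"
    and "reversible \<sigma>' \<longleftrightarrow> reversible \<sigma>"
    and "one_initial \<iota>' \<longleftrightarrow> one_initial \<iota>"
    and "accepted_language Q \<sigma>' \<iota>' \<tau>' = accepted_language Q \<sigma> \<iota> \<tau>"
  by (simp_all add: assms weighted_automaton_def reversible_def one_initial_def
      accepted_language_def runs_def)

lemma RevL1_subset_if_two_valued:
  assumes "\<And>x::'k::comm_semiring_1. x \<noteq> 0 \<Longrightarrow> x = 1"
    and "\<And>x::'m::comm_semiring_1. x \<noteq> 0 \<Longrightarrow> x = 1"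
  shows "(RevL1 TYPE('k) :: 'a list set set) \<subseteq> RevL1 TYPE('m)"
proof
  fix L :: "'a list set" assume "L \<in> RevL1 TYPE('k)"
  then obtain Q :: "nat set" and \<sigma> :: "nat \<Rightarrow> 'a \<Rightarrow> nat \<Rightarrow> 'k" and \<iota> \<tau>
    where L: "L = supp (behaviour Q \<sigma> \<iota> \<tau>)" and aut: "weighted_automaton Q \<sigma> \<iota> \<tau>"
      and rev: "reversible \<sigma>" and init: "one_initial \<iota>"
    unfolding RevL1_def by blast
  define \<sigma>' where "\<sigma>' = (\<lambda>p a q. of_bool (\<sigma> p a q \<noteq> 0) :: 'm)"
  define \<iota>' where "\<iota>' = (\<lambda>q. of_bool (\<iota> q \<noteq> 0) :: 'm)"
  define \<tau>' where "\<tau>' = (\<lambda>q. of_bool (\<tau> q \<noteq> 0) :: 'm)"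
  note invariants = \<sigma>'_def \<iota>'_def \<tau>'_def of_bool_nonzero_weights
  have "finite Q" using aut by (simp add: weighted_automaton_def)
  have L_accepted: "L = accepted_language Q \<sigma> \<iota> \<tau>"
    using L behaviour_two_valued_eq_char_series[OF assms(1) \<open>finite Q\<close> rev init] by simp
  have aut': "weighted_automaton Q \<sigma>' \<iota>' \<tau>'" and rev': "reversible \<sigma>'" and init': "one_initial \<iota>'"
    using aut rev init by (simp_all add: invariants)
  have "accepted_language Q \<sigma> \<iota> \<tau> = supp (behaviour Q \<sigma>' \<iota>' \<tau>')"
    using behaviour_two_valued_eq_char_series[OF assms(2) \<open>finite Q\<close> rev' init'] by (simp add: invariants)
  then show "L \<in> RevL1 TYPE('m)"
    using L_accepted supp_behaviour_in_RevL1[OF aut' rev' init'] by simp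
qed

lemma boolsr_nonzero_eq_one: "x \<noteq> 0 \<Longrightarrow> x = (1::boolsr)"
  by transfer simp

theorem proposition4:
  fixes Q :: "'q set" and \<sigma> :: "'q \<Rightarrow> 'a::finite \<Rightarrow> 'q \<Rightarrow> bit"
    and \<iota> \<tau> :: "'q \<Rightarrow> bit"
  assumes "weighted_automaton Q \<sigma> \<iota> \<tau>" and "reversible \<sigma>" and "one_initial \<iota>"
  shows "(\<exists>L \<in> RevL1 TYPE(boolsr). behaviour Q \<sigma> \<iota> \<tau> = char_series L)
    \<and> (RevL1 TYPE(bit) :: 'a list set set) = RevL1 TYPE(boolsr)"
proof
  have bit_nonzero_eq_one: "x \<noteq> 0 \<Longrightarrow> x = (1::bit)" for x
    by simp
  show RevL1_eq: "(RevL1 TYPE(bit) :: 'a list set set) = RevL1 TYPE(boolsr)"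
    using RevL1_subset_if_two_valued[OF bit_nonzero_eq_one boolsr_nonzero_eq_one]
      RevL1_subset_if_two_valued[OF boolsr_nonzero_eq_one bit_nonzero_eq_one]
    by (rule subset_antisym)
  have "finite Q" using assms(1) by (simp add: weighted_automaton_def)
  define L where "L = accepted_language Q \<sigma> \<iota> \<tau>"
  have behaviour_eq: "behaviour Q \<sigma> \<iota> \<tau> = char_series L"
    unfolding L_def by (rule behaviour_two_valued_eq_char_series) (simp_all add: \<open>finite Q\<close> assms)
  have "L \<in> RevL1 TYPE(boolsr)"
    using supp_behaviour_in_RevL1[OF assms] RevL1_eq by (simp add: behaviour_eq)
  with behaviour_eq show "\<exists>L \<in> RevL1 TYPE(boolsr). behaviour Q \<sigma> \<iota> \<tau> = char_series L" by blast
qed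

end
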